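(* Let $(X,d)$ be a bounded metric space and let $M: X\to\mathbb{R}$ satisfy $d(x,y)\le M(x)\le d(x,z)+M(z)$ for all $x,y,z\in X$. Let $d_S$ be the subset distance on $\mathcal{F}(X)$ defined in the context. Let $X_1,X_2\in\mathcal{F}(X)$ with $|X_1|\le|X_2|$, and let $X_2'\subseteq X_2$ satisfy $|X_1|\le|X_2'|$. Then $d_S(X_1,X_2')\le d_S(X_1,X_2)$.
   Context: $\mathcal{F}(X)$ denotes the set of all finite subsets of $X$. For $A,B\in\mathcal{F}(X)$ with $|A|\le|B|$ and an injection $\chi:A\to B$, define $d_\chi(A,B)=\sum_{x\in A} d(x,\chi(x))+\sum_{y\in B\setminus\chi(A)} M(y)$. The subset distance is $d_S(A,B)=d_S(B,A)=\min\{d_\chi(A,B) : \chi:A\to B \text{ an injection}\}$ (for $|A|\le|B|$). *)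

theory Defs
  imports "HOL-Analysis.Analysis"
begin

definition d_chi :: "('a::metric_space \<Rightarrow> real) \<Rightarrow> 'a set \<Rightarrow> 'a set \<Rightarrow> ('a \<Rightarrow> 'a) \<Rightarrow> real" where
  "d_chi M A B chi = (\<Sum>x\<in>A. dist x (chi x)) + (\<Sum>y\<in>B - chi ` A. M y)"

definition d_S_ord :: "('a::metric_space \<Rightarrow> real) \<Rightarrow> 'a set \<Rightarrow> 'a set \<Rightarrow> real" where
  "d_S_ord M A B = Min {d_chi M A B chi | chi. inj_on chi A \<and> chi ` A \<subseteq> B}"

definition d_S :: "('a::metric_space \<Rightarrow> real) \<Rightarrow> 'a set \<Rightarrow> 'a set \<Rightarrow> real" where
  "d_S M A B = (if card A \<le> card B then d_S_ord M A B else d_S_ord M B A)"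

end

theory Submission
  imports Defs
begin

text \<open>Take an optimal injection \<open>\<chi>\<close> of \<open>X\<^sub>1\<close> into \<open>X\<^sub>2\<close>. The points of \<open>X\<^sub>1\<close> sent outside
  \<open>X\<^sub>2'\<close> are at most as many as the points of \<open>X\<^sub>2'\<close> missed by \<open>\<chi>\<close>, so they can be rerouted
  injectively onto such points \<open>u\<close>. By the triangle inequality and \<open>d(\<chi> x, u) \<le> M(u)\<close>, rerouting
  \<open>x\<close> costs at most the penalty \<open>M(u)\<close> that \<open>u\<close> no longer incurs, and the penalties of the
  discarded points of \<open>X\<^sub>2 - X\<^sub>2'\<close> are nonnegative. Only the bound \<open>d(x, y) \<le> M(x)\<close> is
  needed.\<close>

lemma d_chi_restrict: "d_chi M A B (restrict chi A) = d_chi M A B chi"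
  unfolding d_chi_def by (simp add: image_restrict_eq)

lemma finite_d_chi_values:
  assumes "finite A" "finite B"
  shows "finite {d_chi M A B chi | chi. inj_on chi A \<and> chi ` A \<subseteq> B}"
proof (rule finite_subset)
  show "{d_chi M A B chi | chi. inj_on chi A \<and> chi ` A \<subseteq> B} \<subseteq> d_chi M A B ` (A \<rightarrow>\<^sub>E B)"
    by (auto intro!: image_eqI[where f = "d_chi M A B", OF d_chi_restrict[symmetric]])
  show "finite (d_chi M A B ` (A \<rightarrow>\<^sub>E B))"
    using assms by (intro finite_imageI finite_PiE)
qed

lemma d_S_ord_le_d_chi:
  assumes "finite A" "finite B" "inj_on chi A" "chi ` A \<subseteq> B"
  shows "d_S_ord M A B \<le> d_chi M A B chi"
  unfolding d_S_ord_def
proof (rule Min_le)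
  show "finite {d_chi M A B chi | chi. inj_on chi A \<and> chi ` A \<subseteq> B}"
    using assms(1,2) by (rule finite_d_chi_values)
  show "d_chi M A B chi \<in> {d_chi M A B chi | chi. inj_on chi A \<and> chi ` A \<subseteq> B}"
    using assms(3,4) by auto
qed

lemma d_S_ord_attained:
  assumes "finite A" "finite B" "card A \<le> card B"
  obtains chi where "inj_on chi A" "chi ` A \<subseteq> B" "d_S_ord M A B = d_chi M A B chi"
proof -
  let ?V = "{d_chi M A B chi | chi. inj_on chi A \<and> chi ` A \<subseteq> B}"
  obtain chi where "inj_on chi A" "chi ` A \<subseteq> B"
    using card_le_inj[OF assms] by auto
  then have "?V \<noteq> {}"
    by auto
  with finite_d_chi_values[OF assms(1,2)] have "Min ?V \<in> ?V"
    by (rule Min_in)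
  then obtain chi where "inj_on chi A" "chi ` A \<subseteq> B" "Min ?V = d_chi M A B chi"
    by auto
  then show thesis
    by (intro that) (simp_all add: d_S_ord_def)
qed

lemma card_mapped_outside_le_card_unused:
  assumes "finite A" "finite B" "inj_on chi A" "card A \<le> card B"
  shows "card {x \<in> A. chi x \<notin> B} \<le> card (B - chi ` A)"
proof -
  have "card A = card {x \<in> A. chi x \<in> B} + card {x \<in> A. chi x \<notin> B}"
    using assms(1) by (subst card_Un_disjoint[symmetric]) (auto intro: arg_cong[where f = card])
  moreover have "card {x \<in> A. chi x \<in> B} = card (B \<inter> chi ` A)"
  proof -
    have "B \<inter> chi ` A = chi ` {x \<in> A. chi x \<in> B}" by auto
    then show ?thesis
      using assms(3) by (simp add: card_image inj_on_subset)
  qed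
  moreover have "card B = card (B \<inter> chi ` A) + card (B - chi ` A)"
    using assms(2) by (simp add: card_Int_Diff)
  ultimately show ?thesis
    using assms(4) by linarith
qed

lemma inj_on_patch:
  assumes "inj_on f A" "inj_on g P" "g ` P \<inter> f ` A = {}"
  shows "inj_on (\<lambda>x. if x \<in> P then g x else f x) A"
  using assms unfolding inj_on_def by (smt (verit) disjoint_iff image_eqI)

lemma d_chi_patch_le:
  fixes M :: "'a::metric_space \<Rightarrow> real"
  assumes M_ge_dist: "\<And>x y. dist x y \<le> M x"
    and "finite A" "finite B" "B' \<subseteq> B" "P \<subseteq> A"
    and outside: "\<And>x. x \<in> P \<Longrightarrow> chi x \<notin> B'"
    and g: "inj_on g P" "g ` P \<subseteq> B' - chi ` A"
  shows "d_chi M A B' (\<lambda>x. if x \<in> P then g x else chi x) \<le> d_chi M A B chi"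
proof -
  define chi' where "chi' x = (if x \<in> P then g x else chi x)" for x
  have "finite B'"
    using assms(3,4) by (rule finite_subset[rotated])
  have dist_chi': "dist x (chi' x) \<le> dist x (chi x) + (if x \<in> P then M (g x) else 0)" for x
    using dist_triangle[of x "g x" "chi x"] M_ge_dist[of "g x" "chi x"]
    by (simp add: chi'_def dist_commute)
  have "(\<Sum>x\<in>A. dist x (chi' x)) \<le> (\<Sum>x\<in>A. dist x (chi x) + (if x \<in> P then M (g x) else 0))"
    by (rule sum_mono) (rule dist_chi')
  also have "\<dots> = (\<Sum>x\<in>A. dist x (chi x)) + (\<Sum>x\<in>P. M (g x))"
    using \<open>finite A\<close> \<open>P \<subseteq> A\<close> by (simp add: sum.distrib sum.If_cases Int_absorb1)
  also have "(\<Sum>x\<in>P. M (g x)) = (\<Sum>y\<in>g ` P. M y)"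
    using g(1) by (simp add: sum.reindex)
  finally have matched:
    "(\<Sum>x\<in>A. dist x (chi' x)) \<le> (\<Sum>x\<in>A. dist x (chi x)) + (\<Sum>y\<in>g ` P. M y)" .
  have "B' - chi' ` A = (B' - chi ` A) - g ` P"
    using outside \<open>P \<subseteq> A\<close> by (auto simp: chi'_def)
  then have "(\<Sum>y\<in>g ` P. M y) + (\<Sum>y\<in>B' - chi' ` A. M y) = (\<Sum>y\<in>B' - chi ` A. M y)"
    using sum.subset_diff[OF g(2), of M] \<open>finite B'\<close> by simp
  also have "\<dots> \<le> (\<Sum>y\<in>B - chi ` A. M y)"
    using assms(3,4) order_trans[OF zero_le_dist M_ge_dist]
    by (intro sum_mono2) auto
  finally show ?thesis
    unfolding d_chi_def chi'_def[symmetric] using matched by linarith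
qed

lemma d_chi_reroute_into_subset:
  fixes M :: "'a::metric_space \<Rightarrow> real"
  assumes M_ge_dist: "\<And>x y. dist x y \<le> M x"
    and "finite A" "finite B" "B' \<subseteq> B" "card A \<le> card B'"
    and chi: "inj_on chi A" "chi ` A \<subseteq> B"
  obtains chi' where "inj_on chi' A" "chi' ` A \<subseteq> B'" "d_chi M A B' chi' \<le> d_chi M A B chi"
proof -
  define P where "P = {x \<in> A. chi x \<notin> B'}"
  have "finite P" "finite B'"
    using assms(2-4) finite_subset by (auto simp: P_def)
  have "card P \<le> card (B' - chi ` A)"
    unfolding P_def using card_mapped_outside_le_card_unused[OF assms(2) \<open>finite B'\<close> chi(1) assms(5)] .
  then obtain g where g: "g ` P \<subseteq> B' - chi ` A" "inj_on g P"
    using card_le_inj \<open>finite P\<close> \<open>finite B'\<close> by blast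
  define chi' where "chi' x = (if x \<in> P then g x else chi x)" for x
  have "inj_on chi' A"
    unfolding chi'_def using chi(1) g by (intro inj_on_patch) auto
  moreover have "chi' ` A \<subseteq> B'"
    using chi(2) g by (auto simp: chi'_def P_def)
  moreover have "d_chi M A B' chi' \<le> d_chi M A B chi"
    unfolding chi'_def using g by (intro d_chi_patch_le[OF M_ge_dist assms(2-4)]) (auto simp: P_def)
  ultimately show thesis
    by (rule that)
qed

lemma d_S_ord_subset_le:
  fixes M :: "'a::metric_space \<Rightarrow> real"
  assumes "\<And>x y. dist x y \<le> M x"
    and "finite A" "finite B" "B' \<subseteq> B" "card A \<le> card B'"
  shows "d_S_ord M A B' \<le> d_S_ord M A B"
proof -
  have "finite B'"
    using assms(3,4) by (rule finite_subset[rotated])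
  have "card A \<le> card B"
    using assms(5) card_mono[OF assms(3,4)] by linarith
  obtain chi where chi: "inj_on chi A" "chi ` A \<subseteq> B" "d_S_ord M A B = d_chi M A B chi"
    using d_S_ord_attained[OF assms(2,3) \<open>card A \<le> card B\<close>] .
  obtain chi' where chi': "inj_on chi' A" "chi' ` A \<subseteq> B'" "d_chi M A B' chi' \<le> d_chi M A B chi"
    using d_chi_reroute_into_subset[OF assms chi(1,2)] .
  have "d_S_ord M A B' \<le> d_chi M A B' chi'"
    using d_S_ord_le_d_chi[OF assms(2) \<open>finite B'\<close> chi'(1,2)] .
  then show ?thesis
    using chi(3) chi'(3) by linarith
qed

theorem corollary2p4:
  fixes M :: "'a::metric_space \<Rightarrow> real"
    and X1 X2 X2' :: "'a set"
  assumes bdd: "bounded (UNIV :: 'a set)"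
    and M_cond: "\<And>x y z. dist x y \<le> M x \<and> M x \<le> dist x z + M z"
    and fin1: "finite X1" and fin2: "finite X2"
    and card12: "card X1 \<le> card X2"
    and sub: "X2' \<subseteq> X2"
    and card12': "card X1 \<le> card X2'"
  shows "d_S M X1 X2' \<le> d_S M X1 X2"
proof -
  have "d_S_ord M X1 X2' \<le> d_S_ord M X1 X2"
    using M_cond by (intro d_S_ord_subset_le[OF _ fin1 fin2 sub card12']) blast
  then show ?thesis
    by (simp add: d_S_def card12 card12')
qed

end
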